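(* Let $\tau$ be a veering triangulation of $M$ with $AB$-cycles $c_1,\dots,c_n$ of lengths $k_1,\dots,k_n$ and classes $g_i=[c_i]\in G$. Then $$\mathcal{AB}(\tilde\tau)\cong\bigoplus_{i=1}^n\frac{\mathbb{Z}[G]}{\left(1+(-1)^{k_i+1}g_i\right)},$$ where the $i$th summand's generator maps to a fixed (lifted) face of $c_i$, and consequently, up to a unit of $\mathbb{Z}[G]$, $$V^{\mathcal{AB}}_\tau=\prod_{i=1}^n\left(1+(-1)^{k_i+1}g_i\right).$$
   Context: $\tau$ is a veering triangulation of $M$ (taut ideal triangulation with cooriented faces, each tetrahedron having two bottom and two top faces, a bottom edge, a top edge and four side edges, angle sum $2\pi$ around edges, with a consistent right/left veer on edges modelled on a thickened rhombus whose side edges of positive slope are right-veering and of negative slope left-veering); $F$ its set of faces. $G=H_1(M;\mathbb{Z})/\mathrm{torsion}$ (multiplicative), $\hat M$ the cover with deck group $G$, $\tilde\tau$ the lift. For a face $f$, let $t$ be the tetrahedron having $f$ as a bottom face; $A(f)$ is the top face of $t$ meeting $f$ along the edge of $t$ having the same veer as the top edge of $t$. $A:F\to F$ is a permutation; its cycles are the $AB$-cycles; the length of a cycle is the number of faces in it; each $AB$-cycle determines a directed closed curve in $M$ (crossing its faces in order through the corresponding tetrahedra) and hence a class $[c]\in G$. Lifting to $\hat M$ and choosing lifts of faces, $A$ induces a $\mathbb{Z}[G]$-linear map $A:\mathbb{Z}[G]^F\to\mathbb{Z}[G]^F$ (a lifted face maps to the corresponding top face of the lifted tetrahedron above it). $L^{\mathcal{AB}}=I+A$,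 $\mathcal{AB}(\tilde\tau)=\mathrm{coker}(L^{\mathcal{AB}})$, and $V^{\mathcal{AB}}_\tau=\det L^{\mathcal{AB}}$. *)

theory Defs
  imports "HOL-Analysis.Analysis" "HOL-Library.Poly_Mapping"
begin

text \<open>Group ring Z[G] of an abelian group G (written additively here, so the
  group element g corresponds to the monomial Poly_Mapping.single g 1).\<close>

type_synonym 'g grpring = "'g \<Rightarrow>\<^sub>0 int"

definition grp_elt :: "'g::ab_group_add \<Rightarrow> 'g grpring" where
  "grp_elt g = Poly_Mapping.single g 1"

text \<open>Faces form the finite type 'f; A is the AB-permutation of faces.
  lft f is the deck transformation such that, for the chosen lifts of faces, the
  chosen lift of f is mapped by the lifted A to the translate (lft f) of the chosen lift
  of A f.  The matrix of the Z[G]-linear map A (acting on column vectors,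
  column j = image of the basis vector of face j).\<close>

definition AB_matrix :: "('f::finite \<Rightarrow> 'f) \<Rightarrow> ('f \<Rightarrow> 'g::ab_group_add) \<Rightarrow> 'g grpring ^'f^'f" where
  "AB_matrix A lft = (\<chi> i j. if i = A j then grp_elt (lft j) else 0)"

definition L_AB :: "('f::finite \<Rightarrow> 'f) \<Rightarrow> ('f \<Rightarrow> 'g::ab_group_add) \<Rightarrow> 'g grpring ^'f^'f" where
  "L_AB A lft = mat 1 + AB_matrix A lft"

definition AB_cycle :: "('f \<Rightarrow> 'f) \<Rightarrow> 'f \<Rightarrow> 'f set" where
  "AB_cycle A f = {(A ^^ n) f | n. True}"

definition AB_cycles :: "('f \<Rightarrow> 'f) \<Rightarrow> 'f set set" where
  "AB_cycles A = range (AB_cycle A)"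

text \<open>The class [c] in G of a cycle: the total deck translation accumulated going once
  around the cycle.\<close>

definition cycle_class :: "('f \<Rightarrow> 'g::ab_group_add) \<Rightarrow> 'f set \<Rightarrow> 'g" where
  "cycle_class lft c = (\<Sum>x\<in>c. lft x)"

definition cycle_relator :: "('f \<Rightarrow> 'g::ab_group_add) \<Rightarrow> 'f set \<Rightarrow> 'g grpring" where
  "cycle_relator lft c = 1 + (-1) ^ (card c + 1) * grp_elt (cycle_class lft c)"

definition basis_vec :: "'f::finite \<Rightarrow> 'a::zero \<Rightarrow> 'a ^'f" where
  "basis_vec f r = (\<chi> i. if i = f then r else 0)"

definition in_image :: "'a::comm_ring_1 ^'f::finite^'f \<Rightarrow> 'a ^'f \<Rightarrow> bool" where
  "in_image L v \<longleftrightarrow> (\<exists>w. L *v w = v)"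

end

theory Submission
  imports Defs "HOL-Combinatorics.Orbits"
begin

text \<open>Write \<open>L = I + A\<close> with \<open>A\<close> a permutation matrix twisted by group elements.
  Along an AB-cycle \<open>f\<^sub>0, \<dots>, f\<^sub>k\<^sub>-\<^sub>1\<close> (with \<open>f\<^sub>m\<^sub>+\<^sub>1 = A f\<^sub>m\<close>) the equation
  \<open>L w = v\<close> reads \<open>w\<^sub>m\<^sub>+\<^sub>1 = v\<^sub>m\<^sub>+\<^sub>1 - g\<^sub>m w\<^sub>m\<close>, so all coordinates of a cycle can be
  eliminated successively in favour of the one at the representative \<open>f\<^sub>0\<close>.  Going once
  around the cycle leaves a single equation at \<open>f\<^sub>0\<close>, whose coefficient is the relator
  \<open>1 + (-1)\<^sup>k\<^sup>+\<^sup>1 g\<close>.  Hence the cokernel is generated by the representatives subject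
  to exactly these relations.  The same elimination is a unipotent column operation \<open>N\<close>
  such that \<open>L N\<close> has only the identity term in its Leibniz expansion, whose value
  is the product of the relators.\<close>

lemma grp_elt_0 [simp]: "grp_elt 0 = 1"
  by (simp add: grp_elt_def)

lemma grp_elt_add: "grp_elt (a + b) = grp_elt a * grp_elt b"
  by (simp add: grp_elt_def mult_single)

lemma matrix_matrix_mult_column: "column j (X ** Y) = X *v column j Y"
  by (simp add: column_def matrix_matrix_mult_def matrix_vector_mult_def)

lemma det_eq_prod_diag_if_only_id_term:
  fixes X :: "'a::comm_ring_1 ^'n::finite^'n"
  assumes "\<And>p. p permutes UNIV \<Longrightarrow> p \<noteq> id \<Longrightarrow> \<exists>i. X $ i $ p i = 0"
  shows "det X = (\<Prod>i\<in>UNIV. X $ i $ i)"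
proof -
  let ?term = "\<lambda>p. of_int (sign p) * (\<Prod>i\<in>UNIV. X $ i $ p i)"
  have "det X = ?term id + sum ?term ({p. p permutes UNIV} - {id})"
    unfolding det_def by (simp add: sum.remove[of _ id] finite_permutations permutes_id)
  also have "sum ?term ({p. p permutes UNIV} - {id}) = 0"
  proof (rule sum.neutral, rule ballI)
    fix p :: "'n \<Rightarrow> 'n" assume "p \<in> {p. p permutes UNIV} - {id}"
    then obtain i where "X $ i $ p i = 0" using assms by auto
    then have "(\<Prod>i\<in>UNIV. X $ i $ p i) = 0" by (intro prod_zero) auto
    then show "?term p = 0" by simp
  qed
  finally show ?thesis by simp
qed

locale AB_permutation =
  fixes A :: "'f::finite \<Rightarrow> 'f" and lft :: "'f \<Rightarrow> 'g::ab_group_add" and rep :: "'f set \<Rightarrow> 'f"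
  assumes bij_A: "bij A" and rep_in_cycle: "c \<in> AB_cycles A \<Longrightarrow> rep c \<in> c"
begin

abbreviation cycle_of :: "'f \<Rightarrow> 'f set" where
  "cycle_of \<equiv> AB_cycle A"

definition is_rep :: "'f \<Rightarrow> bool" where
  "is_rep i \<longleftrightarrow> i = rep (cycle_of i)"

definition cycle_pt :: "'f set \<Rightarrow> nat \<Rightarrow> 'f" where
  "cycle_pt c m = (A ^^ m) (rep c)"

definition cycle_pos :: "'f \<Rightarrow> nat" where
  "cycle_pos i = funpow_dist A (rep (cycle_of i)) i"

definition rep_vector :: "('f set \<Rightarrow> 'g grpring) \<Rightarrow> 'g grpring ^'f" where
  "rep_vector a = (\<Sum>c\<in>AB_cycles A. basis_vec (rep c) (a c))"

lemma permutation_A: "permutation A"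
proof -
  have "A permutes UNIV" using bij_A by (rule bij_imp_permutes) simp
  then show ?thesis by (auto simp: permutation_permutes)
qed

lemma A_inv_A [simp]: "A (inv A i) = i" "inv A (A i) = i"
  using bij_A by (auto simp: bij_is_surj surj_f_inv_f bij_is_inj inv_f_f)

lemma cycle_of_eq_orbit: "cycle_of i = orbit A i"
  using orbit_altdef_permutation[OF permutation_A] by (simp add: AB_cycle_def)

lemma in_cycle_of: "i \<in> cycle_of i"
  by (simp add: cycle_of_eq_orbit permutation_A permutation_self_in_orbit)

lemma cycle_of_eq: "j \<in> cycle_of i \<Longrightarrow> cycle_of j = cycle_of i"
  using cyclic_on_orbit'[OF permutation_A, of i] unfolding cycle_of_eq_orbit cyclic_on_alldef
  by auto

lemma cycle_of_in_AB_cycles [simp]: "cycle_of i \<in> AB_cycles A"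
  by (simp add: AB_cycles_def)

lemma cycle_of_rep [simp]: "c \<in> AB_cycles A \<Longrightarrow> cycle_of (rep c) = c"
  using rep_in_cycle cycle_of_eq by (auto simp: AB_cycles_def)

lemma is_rep_rep: "c \<in> AB_cycles A \<Longrightarrow> is_rep (rep c)"
  by (simp add: is_rep_def)

lemma is_rep_unique: "is_rep i \<Longrightarrow> is_rep j \<Longrightarrow> cycle_of i = cycle_of j \<Longrightarrow> i = j"
  by (simp add: is_rep_def)

lemma cycle_pt_0 [simp]: "cycle_pt c 0 = rep c"
  by (simp add: cycle_pt_def)

lemma A_cycle_pt: "A (cycle_pt c m) = cycle_pt c (Suc m)"
  by (simp add: cycle_pt_def)

lemma inv_A_cycle_pt_Suc [simp]: "inv A (cycle_pt c (Suc m)) = cycle_pt c m"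
  by (metis A_cycle_pt A_inv_A(2))

lemma cycle_pt_in: "c \<in> AB_cycles A \<Longrightarrow> cycle_pt c m \<in> c"
  by (metis cycle_of_eq_orbit cycle_of_rep cycle_pt_def funpow_in_orbit in_cycle_of)

lemma cycle_of_cycle_pt [simp]: "c \<in> AB_cycles A \<Longrightarrow> cycle_of (cycle_pt c m) = c"
  using cycle_pt_in cycle_of_eq cycle_of_rep by metis

lemma cycle_pt_enumerates:
  assumes c: "c \<in> AB_cycles A"
  shows "cycle_pt c (card c) = rep c" and "0 < card c"
    and "inj_on (cycle_pt c) {0..<card c}" and "cycle_pt c ` {0..<card c} = c"
proof -
  let ?r = "rep c"
  have r: "?r \<in> orbit A ?r" by (simp add: permutation_A permutation_self_in_orbit)
  have image: "cycle_pt c ` {0..<funpow_dist1 A ?r ?r} = c"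
    using orbit_conv_funpow_dist1[OF r] cycle_of_rep[OF c] cycle_of_eq_orbit
    by (simp add: cycle_pt_def)
  have inj: "inj_on (cycle_pt c) {0..<funpow_dist1 A ?r ?r}"
    using inj_on_funpow_dist1[OF r] by (simp add: cycle_pt_def[abs_def])
  have card: "card c = funpow_dist1 A ?r ?r"
    using image inj card_image by fastforce
  show "cycle_pt c (card c) = rep c"
    using funpow_dist1_prop[OF r] card by (simp add: cycle_pt_def)
  show "0 < card c" "inj_on (cycle_pt c) {0..<card c}" "cycle_pt c ` {0..<card c} = c"
    using card inj image by simp_all
qed

lemma cycle_pos_less: "cycle_pos i < card (cycle_of i)"
  and cycle_pt_cycle_pos [simp]: "cycle_pt (cycle_of i) (cycle_pos i) = i"
proof -
  let ?c = "cycle_of i"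
  have "i \<in> cycle_pt ?c ` {0..<card ?c}"
    using cycle_pt_enumerates(4) in_cycle_of by simp
  then obtain m where m: "m < card ?c" "(A ^^ m) (rep ?c) = i"
    by (auto simp: cycle_pt_def)
  have "cycle_pos i \<le> m"
    unfolding cycle_pos_def funpow_dist_def using m(2) by (rule Least_le)
  with m show "cycle_pos i < card ?c" by simp
  have "(A ^^ cycle_pos i) (rep ?c) = i"
    unfolding cycle_pos_def funpow_dist_def using m(2) by (rule LeastI)
  then show "cycle_pt ?c (cycle_pos i) = i" by (simp add: cycle_pt_def)
qed

lemma cycle_pos_cycle_pt:
  assumes c: "c \<in> AB_cycles A" and m: "m < card c"
  shows "cycle_pos (cycle_pt c m) = m"
proof -
  have "cycle_pt c (cycle_pos (cycle_pt c m)) = cycle_pt c m" "cycle_pos (cycle_pt c m) < card c"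
    using cycle_pt_cycle_pos[of "cycle_pt c m"] cycle_pos_less[of "cycle_pt c m"] c by simp_all
  then show ?thesis using cycle_pt_enumerates(3)[OF c] m by (auto dest: inj_onD)
qed

lemma inv_A_rep:
  assumes "c \<in> AB_cycles A" shows "inv A (rep c) = cycle_pt c (card c - 1)"
proof -
  have "cycle_pt c (Suc (card c - 1)) = rep c" using cycle_pt_enumerates(1,2)[OF assms] by simp
  then show ?thesis by (metis inv_A_cycle_pt_Suc)
qed

lemma cycle_pos_cases:
  obtains (rep) "is_rep i" "i = rep (cycle_of i)" "cycle_pos i = 0"
     "inv A i = cycle_pt (cycle_of i) (card (cycle_of i) - 1)"
     "cycle_pos (inv A i) = card (cycle_of i) - 1" "cycle_of (inv A i) = cycle_of i"
  | (succ) m where "\<not> is_rep i" "i = cycle_pt (cycle_of i) (Suc m)" "cycle_pos i = Suc m"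
     "inv A i = cycle_pt (cycle_of i) m"
     "cycle_pos (inv A i) = m" "cycle_of (inv A i) = cycle_of i"
proof -
  let ?c = "cycle_of i"
  have card: "0 < card ?c" by (simp add: cycle_pt_enumerates(2))
  show ?thesis
  proof (cases "cycle_pos i")
    case 0
    then have i: "i = rep ?c" using cycle_pt_cycle_pos[of i] by simp
    then have prev: "inv A i = cycle_pt ?c (card ?c - 1)"
      using inv_A_rep[OF cycle_of_in_AB_cycles] by metis
    show ?thesis
    proof (rule rep)
      show "is_rep i" using i unfolding is_rep_def .
      show "i = rep ?c" by (fact i)
      show "cycle_pos (inv A i) = card ?c - 1" "cycle_of (inv A i) = ?c"
        unfolding prev using cycle_pos_cycle_pt card by simp_all
    qed fact+
  next
    case (Suc m)
    then have i: "i = cycle_pt ?c (Suc m)" using cycle_pt_cycle_pos[of i] by simp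
    then have prev: "inv A i = cycle_pt ?c m" by (metis inv_A_cycle_pt_Suc)
    have "m < card ?c" using cycle_pos_less[of i] Suc by simp
    show ?thesis
    proof (rule succ)
      show "\<not> is_rep i"
        using Suc cycle_pos_cycle_pt[of ?c 0] card by (auto simp: is_rep_def)
      show "cycle_pos (inv A i) = m" "cycle_of (inv A i) = ?c"
        unfolding prev using cycle_pos_cycle_pt \<open>m < card ?c\<close> by simp_all
    qed fact+
  qed
qed

lemma L_AB_mult_nth:
  "(L_AB A lft *v w) $ i = w $ i + grp_elt (lft (inv A i)) * w $ (inv A i)"
proof -
  have "(L_AB A lft *v w) $ i = (\<Sum>j\<in>UNIV.
      ((if i = j then 1 else 0) + (if i = A j then grp_elt (lft j) else 0)) * w $ j)"
    by (simp add: L_AB_def AB_matrix_def matrix_vector_mult_def mat_def)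
  also have "\<dots> = (\<Sum>j\<in>UNIV. if i = j then w $ j else 0)
      + (\<Sum>j\<in>UNIV. if j = inv A i then grp_elt (lft j) * w $ j else 0)"
    unfolding sum.distrib[symmetric] by (rule sum.cong) (auto simp: distrib_right, metis A_inv_A(2))
  finally show ?thesis by simp
qed

lemma rep_vector_nth: "rep_vector a $ i = (if is_rep i then a (cycle_of i) else 0)"
proof -
  have "rep_vector a $ i
      = (\<Sum>c\<in>AB_cycles A. if c = cycle_of i then (if is_rep i then a c else 0) else 0)"
    unfolding rep_vector_def sum_component
    by (rule sum.cong) (auto simp: basis_vec_def is_rep_def)
  then show ?thesis by simp
qed

definition walk_weight :: "'f set \<Rightarrow> nat \<Rightarrow> 'g grpring" where
  "walk_weight c m = grp_elt (\<Sum>n<m. lft (cycle_pt c n))"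

lemma walk_weight_0 [simp]: "walk_weight c 0 = 1"
  by (simp add: walk_weight_def)

lemma walk_weight_Suc: "walk_weight c (Suc m) = walk_weight c m * grp_elt (lft (cycle_pt c m))"
  by (simp add: walk_weight_def grp_elt_add)

lemma walk_weight_card:
  assumes c: "c \<in> AB_cycles A"
  shows "walk_weight c (card c) = grp_elt (cycle_class lft c)"
proof -
  have "(\<Sum>n<card c. lft (cycle_pt c n)) = (\<Sum>x\<in>c. lft x)"
    using sum.reindex[OF cycle_pt_enumerates(3)[OF c], of lft] cycle_pt_enumerates(4)[OF c]
    by (simp add: lessThan_atLeast0)
  then show ?thesis by (simp add: walk_weight_def cycle_class_def)
qed

lemma cycle_relator_eq_walk_weight:
  assumes c: "c \<in> AB_cycles A"
  defines "l \<equiv> card c - 1"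
  shows "cycle_relator lft c = 1 + (-1) ^ l * (walk_weight c l * grp_elt (lft (cycle_pt c l)))"
proof -
  have card: "card c = Suc l" using cycle_pt_enumerates(2)[OF c] by (simp add: l_def)
  show ?thesis
    using walk_weight_card[OF c] by (simp add: cycle_relator_def card walk_weight_Suc)
qed

text \<open>Back-substitution for \<open>L w = v\<close> along a cycle, with the free coordinate at the
  representative set to \<open>0\<close>; the equation at the representative is then left over.\<close>

primrec cycle_solution :: "'g grpring ^'f \<Rightarrow> 'f set \<Rightarrow> nat \<Rightarrow> 'g grpring" where
  "cycle_solution v c 0 = 0"
| "cycle_solution v c (Suc m) =
     v $ cycle_pt c (Suc m) - grp_elt (lft (cycle_pt c m)) * cycle_solution v c m"

lemma cokernel_generated_by_reps: "\<exists>a. in_image (L_AB A lft) (v - rep_vector a)"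
proof -
  define w where "w = (\<chi> i. cycle_solution v (cycle_of i) (cycle_pos i))"
  define a where "a c = v $ rep c - grp_elt (lft (cycle_pt c (card c - 1)))
      * cycle_solution v c (card c - 1)" for c
  have "L_AB A lft *v w = v - rep_vector a"
  proof (rule vec_eq_iff[THEN iffD2, rule_format])
    fix i
    show "(L_AB A lft *v w) $ i = (v - rep_vector a) $ i"
      by (cases i rule: cycle_pos_cases)
        (simp_all add: L_AB_mult_nth rep_vector_nth w_def a_def)
  qed
  then show ?thesis unfolding in_image_def by blast
qed

lemma cycle_relator_dvd_if_in_image:
  assumes image: "L_AB A lft *v w = rep_vector a" and c: "c \<in> AB_cycles A"
  shows "cycle_relator lft c dvd a c"
proof -
  have eqn: "w $ i + grp_elt (lft (inv A i)) * w $ (inv A i)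
      = (if is_rep i then a (cycle_of i) else 0)" for i
    using arg_cong[OF image, of "\<lambda>v. v $ i"] unfolding L_AB_mult_nth rep_vector_nth .
  have along: "w $ cycle_pt c m = (-1) ^ m * walk_weight c m * w $ rep c" if "m < card c" for m
    using that
  proof (induction m)
    case (Suc m)
    let ?i = "cycle_pt c (Suc m)"
    have "cycle_pos ?i = Suc m" using cycle_pos_cycle_pt[OF c Suc.prems] .
    then have "\<not> is_rep ?i"
      by (cases ?i rule: cycle_pos_cases) auto
    with eqn[of ?i] have "w $ ?i = - (grp_elt (lft (cycle_pt c m)) * w $ cycle_pt c m)"
      by (simp add: eq_neg_iff_add_eq_0)
    then show ?case using Suc by (simp add: walk_weight_Suc algebra_simps)
  qed simp
  let ?l = "card c - 1"
  have "?l < card c" using cycle_pt_enumerates(2)[OF c] by simp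
  have "a c = w $ rep c + grp_elt (lft (cycle_pt c ?l)) * w $ cycle_pt c ?l"
    using eqn[of "rep c"] c by (simp add: is_rep_rep inv_A_rep)
  also have "\<dots> = cycle_relator lft c * w $ rep c"
    unfolding cycle_relator_eq_walk_weight[OF c] along[OF \<open>?l < card c\<close>]
    by (simp add: algebra_simps)
  finally show ?thesis by simp
qed

text \<open>The vector with entry \<open>alt_walk_weight i * b (cycle_of i)\<close> is the exact solution of
  the recursion along each cycle; its image under \<open>L\<close> therefore vanishes except at the
  representatives, where the relator appears after going once around.\<close>

definition alt_walk_weight :: "'f \<Rightarrow> 'g grpring" where
  "alt_walk_weight i = (-1) ^ cycle_pos i * walk_weight (cycle_of i) (cycle_pos i)"

lemma alt_walk_weight_rep: "is_rep i \<Longrightarrow> alt_walk_weight i = 1"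
  by (cases i rule: cycle_pos_cases) (auto simp: alt_walk_weight_def)

lemma L_AB_mult_alt_walk_weight:
  "(L_AB A lft *v (\<chi> i. alt_walk_weight i * b (cycle_of i))) $ i
   = (if is_rep i then cycle_relator lft (cycle_of i) * b (cycle_of i) else 0)"
  by (cases i rule: cycle_pos_cases)
    (simp_all add: L_AB_mult_nth cycle_relator_eq_walk_weight alt_walk_weight_def
      walk_weight_Suc algebra_simps)

lemma in_image_if_cycle_relator_dvd:
  assumes "\<forall>c\<in>AB_cycles A. cycle_relator lft c dvd a c"
  shows "in_image (L_AB A lft) (rep_vector a)"
proof -
  obtain b where b: "\<And>c. c \<in> AB_cycles A \<Longrightarrow> a c = cycle_relator lft c * b c"
    using assms unfolding dvd_def by metis
  have "L_AB A lft *v (\<chi> i. alt_walk_weight i * b (cycle_of i)) = rep_vector a"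
    by (simp add: vec_eq_iff L_AB_mult_alt_walk_weight rep_vector_nth b)
  then show ?thesis unfolding in_image_def by blast
qed

lemma in_image_rep_vector_iff:
  "in_image (L_AB A lft) (rep_vector a) \<longleftrightarrow> (\<forall>c\<in>AB_cycles A. cycle_relator lft c dvd a c)"
  using cycle_relator_dvd_if_in_image in_image_if_cycle_relator_dvd
  unfolding in_image_def by blast

definition elimination_matrix :: "'g grpring ^'f^'f" where
  "elimination_matrix = (\<chi> i j. if is_rep j \<and> cycle_of i = cycle_of j then alt_walk_weight i
     else if i = j then 1 else 0)"

definition reduced_L_AB :: "'g grpring ^'f^'f" where
  "reduced_L_AB = (\<chi> i j. if is_rep j then (if i = j then cycle_relator lft (cycle_of j) else 0)
     else (if i = j then 1 else 0) + (if inv A i = j then grp_elt (lft j) else 0))"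

lemma L_AB_mult_elimination_matrix: "L_AB A lft ** elimination_matrix = reduced_L_AB"
proof (rule vec_eq_iff[THEN iffD2, rule_format], rule vec_eq_iff[THEN iffD2, rule_format])
  fix i j
  have "column j (L_AB A lft ** elimination_matrix) = column j reduced_L_AB"
  proof (cases "is_rep j")
    case True
    define b where "b c = (if c = cycle_of j then 1 else 0 :: 'g grpring)" for c
    have "column j elimination_matrix = (\<chi> l. alt_walk_weight l * b (cycle_of l))"
      using True by (auto simp: elimination_matrix_def column_def vec_eq_iff b_def)
    then have "column j (L_AB A lft ** elimination_matrix)
        = L_AB A lft *v (\<chi> l. alt_walk_weight l * b (cycle_of l))"
      by (simp only: matrix_matrix_mult_column)
    then show ?thesis
      using True is_rep_unique[of _ j]
      unfolding vec_eq_iff L_AB_mult_alt_walk_weight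
      by (auto simp: reduced_L_AB_def column_def b_def)
  next
    case False
    then have "column j elimination_matrix = (\<chi> l. if l = j then 1 else 0)"
      by (auto simp: elimination_matrix_def column_def vec_eq_iff)
    then have "column j (L_AB A lft ** elimination_matrix)
        = L_AB A lft *v (\<chi> l. if l = j then 1 else 0)"
      by (simp only: matrix_matrix_mult_column)
    then show ?thesis
      using False by (auto simp: vec_eq_iff L_AB_mult_nth reduced_L_AB_def column_def)
  qed
  then show "(L_AB A lft ** elimination_matrix) $ i $ j = reduced_L_AB $ i $ j"
    by (simp add: column_def vec_eq_iff)
qed

lemma det_elimination_matrix: "det elimination_matrix = 1"
proof -
  have "det elimination_matrix = (\<Prod>i\<in>UNIV. elimination_matrix $ i $ i)"
  proof (rule det_eq_prod_diag_if_only_id_term, rule ccontr)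
    fix p :: "'f \<Rightarrow> 'f"
    assume p: "p permutes UNIV" "p \<noteq> id" and nz: "\<not> (\<exists>i. elimination_matrix $ i $ p i = 0)"
    obtain i where i: "p i \<noteq> i" using p(2) by (metis eq_id_iff)
    have "elimination_matrix $ i $ p i \<noteq> 0" using nz by blast
    with i have rep_pi: "is_rep (p i)"
      by (auto simp: elimination_matrix_def split: if_splits)
    have "elimination_matrix $ p i $ p (p i) \<noteq> 0" using nz by blast
    then have "is_rep (p (p i)) \<and> cycle_of (p i) = cycle_of (p (p i)) \<or> p (p i) = p i"
      by (auto simp: elimination_matrix_def split: if_splits)
    then have "p (p i) = p i"
      using is_rep_unique[OF rep_pi, of "p (p i)"] by auto
    then show False using i permutes_inj[OF p(1)] by (auto dest: injD)
  qed
  also have "\<dots> = 1"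
    by (rule prod.neutral) (auto simp: elimination_matrix_def alt_walk_weight_rep)
  finally show ?thesis .
qed

text \<open>A permutation picking a nonzero entry in every row of \<open>reduced_L_AB\<close> moves each face
  either nowhere or one step back along its cycle, onto a non-representative.  Once it
  moves one face, it must therefore keep stepping back forever and eventually land on a
  representative, which is impossible.\<close>

lemma reduced_L_AB_only_id_term:
  assumes p: "p permutes UNIV" "p \<noteq> id"
  shows "\<exists>i. reduced_L_AB $ i $ p i = 0"
proof (rule ccontr)
  assume nz: "\<not> (\<exists>i. reduced_L_AB $ i $ p i = 0)"
  have step: "p l = l \<or> (\<not> is_rep (p l) \<and> p l = inv A l)" for l
  proof -
    have "reduced_L_AB $ l $ p l \<noteq> 0" using nz by blast
    then show ?thesis by (auto simp: reduced_L_AB_def split: if_splits)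
  qed
  have inj: "p x = p y \<Longrightarrow> x = y" for x y
    using permutes_inj[OF p(1)] by (auto dest: injD)
  obtain i0 where i0: "p i0 \<noteq> i0" using p(2) by (metis eq_id_iff)
  have chain: "p ((inv A ^^ n) i0) = (inv A ^^ Suc n) i0
      \<and> (inv A ^^ Suc n) i0 \<noteq> (inv A ^^ n) i0 \<and> \<not> is_rep ((inv A ^^ Suc n) i0)" for n
  proof (induction n)
    case 0 then show ?case using step[of i0] i0 by auto
  next
    case (Suc n)
    have "p ((inv A ^^ Suc n) i0) \<noteq> (inv A ^^ Suc n) i0"
      using Suc inj[of "(inv A ^^ Suc n) i0" "(inv A ^^ n) i0"] by auto
    then show ?case using step[of "(inv A ^^ Suc n) i0"] by auto
  qed
  have "rep (cycle_of i0) \<in> orbit (inv A) i0"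
    using orbit_inv_eq[OF permutation_A] cycle_of_eq_orbit rep_in_cycle[OF cycle_of_in_AB_cycles]
    by metis
  then obtain n where "rep (cycle_of i0) = (inv A ^^ n) i0" "0 < n"
    unfolding orbit_altdef by auto
  then obtain m where "rep (cycle_of i0) = (inv A ^^ Suc m) i0"
    by (cases n) auto
  moreover have "is_rep (rep (cycle_of i0))" by (simp add: is_rep_rep)
  ultimately show False using chain[of m] by simp
qed

lemma det_reduced_L_AB: "det reduced_L_AB = (\<Prod>c\<in>AB_cycles A. cycle_relator lft c)"
proof -
  have "det reduced_L_AB = (\<Prod>i\<in>UNIV. reduced_L_AB $ i $ i)"
    by (rule det_eq_prod_diag_if_only_id_term[OF reduced_L_AB_only_id_term])
  also have "\<dots> = (\<Prod>i\<in>UNIV. if is_rep i then cycle_relator lft (cycle_of i) else 1)"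
  proof (rule prod.cong)
    fix i show "reduced_L_AB $ i $ i = (if is_rep i then cycle_relator lft (cycle_of i) else 1)"
      by (cases i rule: cycle_pos_cases) (auto simp: reduced_L_AB_def)
  qed simp
  also have "\<dots> = (\<Prod>i\<in>{i. is_rep i}. cycle_relator lft (cycle_of i))"
    using prod.inter_filter[of UNIV "\<lambda>i. cycle_relator lft (cycle_of i)" is_rep] by simp
  also have "{i. is_rep i} = rep ` AB_cycles A"
    by (auto simp: is_rep_def)
  also have "(\<Prod>i\<in>rep ` AB_cycles A. cycle_relator lft (cycle_of i))
      = (\<Prod>c\<in>AB_cycles A. cycle_relator lft c)"
  proof (subst prod.reindex)
    show "inj_on rep (AB_cycles A)" by (rule inj_onI) (metis cycle_of_rep)
  qed simp
  finally show ?thesis .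
qed

lemma det_L_AB: "det (L_AB A lft) = (\<Prod>c\<in>AB_cycles A. cycle_relator lft c)"
  using det_mul[of "L_AB A lft" elimination_matrix] L_AB_mult_elimination_matrix
    det_elimination_matrix det_reduced_L_AB
  by simp

end

theorem mainTheorem15:
  fixes A :: "'f::finite \<Rightarrow> 'f"
    and lft :: "'f \<Rightarrow> 'g::ab_group_add"
    and rep :: "'f set \<Rightarrow> 'f"
  assumes "bij A"
    and "\<forall>c\<in>AB_cycles A. rep c \<in> c"
  shows
    "(\<forall>v :: 'g grpring ^'f. \<exists>a :: 'f set \<Rightarrow> 'g grpring.
        in_image (L_AB A lft) (v - (\<Sum>c\<in>AB_cycles A. basis_vec (rep c) (a c))))
     \<and> (\<forall>a :: 'f set \<Rightarrow> 'g grpring.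
        in_image (L_AB A lft) (\<Sum>c\<in>AB_cycles A. basis_vec (rep c) (a c))
        \<longleftrightarrow> (\<forall>c\<in>AB_cycles A. cycle_relator lft c dvd a c))
     \<and> (\<exists>u. u dvd 1 \<and>
        det (L_AB A lft) = u * (\<Prod>c\<in>AB_cycles A. cycle_relator lft c))"
proof -
  interpret AB_permutation A lft rep
    using assms by unfold_locales auto
  have "\<exists>u. u dvd 1 \<and> det (L_AB A lft) = u * (\<Prod>c\<in>AB_cycles A. cycle_relator lft c)"
    by (intro exI[of _ 1]) (simp add: det_L_AB)
  then show ?thesis
    using cokernel_generated_by_reps in_image_rep_vector_iff unfolding rep_vector_def by blast
qed

end
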